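(* Let $K,N,f,d,Q$ be positive integers with $N\ge (K-1)d+3f+1$. Let $\mathbf{G}\in\{0,1\}^{QK\times N}$ be a matrix each of whose rows is either the all-zero row or contains at most $K-1$ zero entries. Let $\mathcal{F}\subseteq[N]$ with $|\mathcal{F}|\le f$ be the set of Byzantine nodes, and let $\mathcal{J}\subseteq[N]$ with $|\mathcal{J}|=N-f$ be a quorum. Suppose each node $j\in\mathcal{J}$ reports, for each $\ell\in[QK]$, a bit $\beta_{\ell,j}\in\{0,1\}$, where $\beta_{\ell,j}=\mathbf{G}_{\ell,j}$ whenever $j\notin\mathcal{F}$ (reports of Byzantine nodes are arbitrary). Then for every $\ell\in[QK]$, exactly one of the following holds: (i) $|\{j\in\mathcal{J}:\beta_{\ell,j}=0\}|\ge K+f$; (ii) $|\{j\in\mathcal{J}:\beta_{\ell,j}=1\}|\ge f+1$.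
   Context: In the protocol, $\mathbf{G}$'s $i$-th column is node $i$'s binary results vector; each row of $\mathbf{G}$ (computed honestly) is the zero pattern of a codeword of an $[N,K]$ MDS code, hence is all-zero or has at most $K-1$ zeros. A report of $0$ (resp. $1$) in entry $\ell$ is a partial signature under a $(K+f,N)$ (resp. $(f+1,N)$) threshold signature scheme, so (i) (resp. (ii)) means the leader can form a valid threshold signature endorsing $0$ (resp. $1$). Here $d\ge1$ is the degree of the verification polynomial. *)

theory Defs
  imports Main
begin

end

theory Submission
  imports Defs
begin

(* Honest nodes report their true entry, so the Byzantine nodes can add at most f reports of
   either value to those coming from the row itself.  An all-zero row therefore yields at most f
   ones, hence at least N - 2f >= K + f zeros; a row with at most K - 1 zeros yields at most
   K - 1 + f zeros, hence at least N - K - 2f + 1 >= f + 1 ones.  As zeros and ones together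
   make up the N - f reports, each case satisfies exactly one of the two thresholds. *)

lemma card_reports_le:
  assumes "finite F" "finite S" "J \<subseteq> S"
    and "\<And>j. j \<in> J \<Longrightarrow> j \<notin> F \<Longrightarrow> \<beta> j = g j"
  shows "card {j \<in> J. \<beta> j = b} \<le> card F + card {j \<in> S. g j = b}"
proof -
  have "card {j \<in> J. \<beta> j = b} \<le> card (F \<union> {j \<in> S. g j = b})"
    using assms by (intro card_mono) auto
  also have "\<dots> \<le> card F + card {j \<in> S. g j = b}"
    by (rule card_Un_le)
  finally show ?thesis .
qed

lemma card_binary_reports:
  assumes "finite J" and "\<And>j. j \<in> J \<Longrightarrow> \<beta> j \<in> {0, 1 :: nat}"
  shows "card {j \<in> J. \<beta> j = 0} + card {j \<in> J. \<beta> j = 1} = card J"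
proof -
  have "{j \<in> J. \<beta> j = 0} \<union> {j \<in> J. \<beta> j = 1} = J"
    using assms(2) by auto
  then show ?thesis
    using assms(1) by (subst card_Un_disjoint[symmetric]) auto
qed

theorem lemma2:
  fixes K N f d Q :: nat
    and G :: "nat \<Rightarrow> nat \<Rightarrow> nat"
    and \<beta> :: "nat \<Rightarrow> nat \<Rightarrow> nat"
    and F J :: "nat set"
  assumes pos: "K > 0" "N > 0" "f > 0" "d > 0" "Q > 0"
    and N_bound: "N \<ge> (K - 1) * d + 3 * f + 1"
    and G_binary: "\<And>l j. l < Q * K \<Longrightarrow> j < N \<Longrightarrow> G l j \<in> {0, 1}"
    and G_rows: "\<And>l. l < Q * K \<Longrightarrow>
        (\<forall>j < N. G l j = 0) \<or> card {j. j < N \<and> G l j = 0} \<le> K - 1"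
    and F_sub: "F \<subseteq> {0..<N}" and F_card: "card F \<le> f"
    and J_sub: "J \<subseteq> {0..<N}" and J_card: "card J = N - f"
    and \<beta>_binary: "\<And>l j. l < Q * K \<Longrightarrow> j \<in> J \<Longrightarrow> \<beta> l j \<in> {0, 1}"
    and \<beta>_honest: "\<And>l j. l < Q * K \<Longrightarrow> j \<in> J \<Longrightarrow> j \<notin> F \<Longrightarrow> \<beta> l j = G l j"
  shows "\<forall>l < Q * K.
           (card {j \<in> J. \<beta> l j = 0} \<ge> K + f) \<noteq> (card {j \<in> J. \<beta> l j = 1} \<ge> f + 1)"
proof (intro allI impI)
  fix l assume l: "l < Q * K"
  have fin: "finite F" "finite J"
    using F_sub J_sub finite_subset by auto
  have reports_le: "card {j \<in> J. \<beta> l j = b} \<le> f + card {j. j < N \<and> G l j = b}" for b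
    using card_reports_le[OF fin(1) _ J_sub, of "\<beta> l" "G l" b] \<beta>_honest[OF l] F_card
    by fastforce
  have total: "card {j \<in> J. \<beta> l j = 0} + card {j \<in> J. \<beta> l j = 1} = N - f"
    using card_binary_reports[OF fin(2)] \<beta>_binary[OF l] J_card by auto
  have "(K - 1) * d \<ge> K - 1"
    using pos(4) by simp
  then have N_ge: "N \<ge> K + 3 * f"
    using N_bound pos(1) by linarith
  from G_rows[OF l] show
    "(card {j \<in> J. \<beta> l j = 0} \<ge> K + f) \<noteq> (card {j \<in> J. \<beta> l j = 1} \<ge> f + 1)"
  proof
    assume "\<forall>j < N. G l j = 0"
    then have "card {j. j < N \<and> G l j = 1} = 0"
      by simp
    then show ?thesis
      using reports_le[of 1] total N_ge by linarith
  next
    assume "card {j. j < N \<and> G l j = 0} \<le> K - 1"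
    then show ?thesis
      using reports_le[of 0] total N_ge pos(1) by linarith
  qed
qed

end
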